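(* Let $\lambda$ be a weak Perron number and let $f_\lambda:\ast_{Nn}\to\ast_{Nn}$ be the star map constructed below. Then its split map $S(f_\lambda):S(\ast_{Nn})\to S(\ast_{Nn})$ is ergodic; i.e. for each pair of edges $y_I,z_J$ of $S(\ast_{Nn})$ there exists $L$ such that the edge path $S(f_\lambda)^L(y_I)$ traverses $z_J$.
   Context: A weak Perron number is a real algebraic integer $\lambda$ with $\lambda\ge|\lambda_i|$ for all Galois conjugates; a Perron number satisfies the strict inequality for all conjugates other than itself. Let $N$ be a positive integer such that $\mu=\lambda^N$ is Perron, and let $f_\mu:\ast_n\to\ast_n$ (with its edge lengths) be the star map constructed for the Perron number $\mu$ as follows: with $\mathcal{O}_\mu$ the ring of integers of $\mathbb{Q}(\mu)$, $V_\mu=\mathbb{Q}(\mu)\otimes\mathbb{R}$, unit eigenvectors $v_1$ (eigenvalue $\mu$), $v_2,\dots$ of multiplication by $\mu$, cone $K_\mu=\{\sum a_iv_i:a_1>0,a_1>|a_i|\}$, a rational closed convex polyhedral cone $KR_\mu$ generated by elements of $\mathcal{O}_\mu$ with $\mu K_\mu\subset KR_\mu\subset K_\mu$, semigroup $(\mathcal{O}_\mu\cap KR_\mu)\setminus\{0\}$ generated by $s_1,\dots,s_m$; positive integers $N'>n_0$ with $\mu^{N'}\equiv\mu^{n_0}\pmod{2\mathcal{O}_\mu}$; an integer $M=p(N'-n_0)+N'$ and nonnegative integers $e^{(k)}_i$ with $\mu^Ms_k=\sum_i(2e^{(k)}_i+2)s_i+2\mu s_k+\mu^{n_0}s_k$;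 $n=mM$, edges $(s_k,i)$ of length $\mu^{i-1}s_k$; $f_\mu$ fixes the center, maps $(s_k,i)\mapsto(s_k,i+1)$ for $i<M$, and maps $(s_k,M)$ to the path traversing $(s_k,1)$ back and forth $e^{(k)}_k+1$ times, then each $(s_j,1)$, $j\ne k$ (in some fixed order), back and forth $e^{(k)}_j+1$ times, then $(s_k,2)$ out and back once, then $(s_k,n_0+1)$ once. Now $\ast_{Nn}$ is formed by gluing $N$ copies $C^0,\dots,C^{N-1}$ of $\ast_n$ at their centers; edge $(i,j)$ is the copy in $C^i$ of edge $j$ of $\ast_n$, with length $\lambda^i$ times the length of $j$. The map $f_\lambda$ sends $(i,j)\mapsto(i+1,j)$ for $i<N-1$, and sends $(N-1,j)$ to the copy in $C^0$ of the edge path $f_\mu(j)$. Split map: prototype $P_7$ with edges $a,\dots,g$ from $v_0$ to $v_1$ (uppercase = reversed), $\phi_1=\mathrm{id}$, and for $m'\ge0$, $\phi_{3+2m'}$: $a\mapsto aG(aB)^{m'}a$, $b\mapsto bD(bC)^{m'}b$, $c\mapsto cF(cA)^{m'}c$, $d\mapsto aB(aB)^{m'}a$, $e\mapsto cB(aB)^{m'}a$, $f\mapsto aC(aB)^{m'}a$, $g\mapsto bE(bA)^{m'}b$. The split graph replaces each edge $x_I$ (oriented center to tip) by seven parallel edges $a_I,\dots,g_I$; the split map sends $y_I$ to the path obtained from the word $\phi_\ell(y)$, $\ell$ the number of edges of $f_\lambda(x_I)$, by giving its $t$-th letter the subscript of the $t$-th edge of $f_\lambda(x_I)$. *)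

theory Defs
  imports Complex_Main "HOL-Computational_Algebra.Computational_Algebra"
begin

definition alg_int :: "'a::field_char_0 \<Rightarrow> bool" where
  "alg_int x \<longleftrightarrow> (\<exists>p::int poly. lead_coeff p = 1 \<and> poly (map_poly of_int p) x = 0)"

definition galois_conj :: "complex \<Rightarrow> real \<Rightarrow> bool" where
  "galois_conj z lam \<longleftrightarrow> (\<exists>p::rat poly. irreducible p
      \<and> poly (map_poly of_rat p) (complex_of_real lam) = 0
      \<and> poly (map_poly of_rat p) z = 0)"

definition weak_perron :: "real \<Rightarrow> bool" where
  "weak_perron lam \<longleftrightarrow> alg_int lam \<and> (\<forall>z. galois_conj z lam \<longrightarrow> cmod z \<le> lam)"

definition perron :: "real \<Rightarrow> bool" where
  "perron lam \<longleftrightarrow> alg_int lam \<and>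
     (\<forall>z. galois_conj z lam \<and> z \<noteq> complex_of_real lam \<longrightarrow> cmod z < lam)"

definition in_Qfield :: "real \<Rightarrow> real \<Rightarrow> bool" where
  "in_Qfield x mu \<longleftrightarrow> (\<exists>q::rat poly. x = poly (map_poly of_rat q) mu)"

text \<open>Edge paths are lists of (edge, direction); direction True means the edge is
  traversed in its orientation (centre to tip), False means reversed.\<close>

definition back_forth :: "nat \<Rightarrow> 'e \<Rightarrow> ('e \<times> bool) list" where
  "back_forth r x = concat (replicate r [(x, True), (x, False)])"

text \<open>The star map f_mu on the star with edges (k,j), k < m (generator s_k), 1 <= j <= M.
  ord k lists the indices j <> k in the fixed order used in the construction.\<close>
definition fmu :: "nat \<Rightarrow> nat \<Rightarrow> (nat \<Rightarrow> nat \<Rightarrow> nat) \<Rightarrow> (nat \<Rightarrow> nat list)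
    \<Rightarrow> nat \<times> nat \<Rightarrow> ((nat \<times> nat) \<times> bool) list" where
  "fmu M n0 e ord x = (case x of (k, j) \<Rightarrow>
     (if j < M then [((k, j + 1), True)]
      else back_forth (e k k + 1) (k, 1)
           @ concat (map (\<lambda>j'. back_forth (e k j' + 1) (j', 1)) (ord k))
           @ [((k, 2), True), ((k, 2), False), ((k, n0 + 1), True)]))"

text \<open>Edges of the star with N n edges: (i,k,j) = copy in C^i of edge (k,j).\<close>
definition star_edges :: "nat \<Rightarrow> nat \<Rightarrow> nat \<Rightarrow> (nat \<times> nat \<times> nat) set" where
  "star_edges N m M = {(i, k, j). i < N \<and> k < m \<and> 1 \<le> j \<and> j \<le> M}"

definition flam :: "nat \<Rightarrow> nat \<Rightarrow> nat \<Rightarrow> (nat \<Rightarrow> nat \<Rightarrow> nat) \<Rightarrow> (nat \<Rightarrow> nat list)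
    \<Rightarrow> nat \<times> nat \<times> nat \<Rightarrow> ((nat \<times> nat \<times> nat) \<times> bool) list" where
  "flam N M n0 e ord x = (case x of (i, k, j) \<Rightarrow>
     (if i + 1 < N then [((i + 1, k, j), True)]
      else map (\<lambda>((k', j'), d). ((0, k', j'), d)) (fmu M n0 e ord (k, j))))"

datatype letter = La | Lb | Lc | Ld | Le | Lf | Lg

text \<open>The words phi_l of the prototype P_7; (x, True) is a lowercase letter,
  (x, False) uppercase (reversed). Only odd l are relevant.\<close>
definition phi :: "nat \<Rightarrow> letter \<Rightarrow> (letter \<times> bool) list" where
  "phi l y = (if l = 1 then [(y, True)] else
     (let m' = (l - 3) div 2;
          u = (\<lambda>x. (x, True)); U = (\<lambda>x. (x, False));
          w = (\<lambda>s t q r z. [u s, U t] @ concat (replicate m' [u q, U r]) @ [u z])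
      in (case y of
            La \<Rightarrow> w La Lg La Lb La
          | Lb \<Rightarrow> w Lb Ld Lb Lc Lb
          | Lc \<Rightarrow> w Lc Lf Lc La Lc
          | Ld \<Rightarrow> w La Lb La Lb La
          | Le \<Rightarrow> w Lc Lb La Lb La
          | Lf \<Rightarrow> w La Lc La Lb La
          | Lg \<Rightarrow> w Lb Le Lb La Lb)))"

definition rev_path :: "('e \<times> bool) list \<Rightarrow> ('e \<times> bool) list" where
  "rev_path p = rev (map (\<lambda>(x, d). (x, \<not> d)) p)"

definition path_map :: "('e \<Rightarrow> ('e \<times> bool) list) \<Rightarrow> ('e \<times> bool) list \<Rightarrow> ('e \<times> bool) list" where
  "path_map F p = concat (map (\<lambda>(x, d). if d then F x else rev_path (F x)) p)"

text \<open>Split map: the split edge (y, I) is the copy y_I; it is sent to phi_l(y) with the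
  t-th letter subscripted by the t-th edge of f_lambda(x_I), l = length of f_lambda(x_I).\<close>
definition split_map :: "nat \<Rightarrow> nat \<Rightarrow> nat \<Rightarrow> (nat \<Rightarrow> nat \<Rightarrow> nat) \<Rightarrow> (nat \<Rightarrow> nat list)
    \<Rightarrow> letter \<times> (nat \<times> nat \<times> nat) \<Rightarrow> ((letter \<times> (nat \<times> nat \<times> nat)) \<times> bool) list" where
  "split_map N M n0 e ord x = (case x of (y, I) \<Rightarrow>
     (let w = flam N M n0 e ord I
      in map (\<lambda>((l, d), (It, _)). ((l, It), d)) (zip (phi (length w) y) w)))"

definition split_edges :: "nat \<Rightarrow> nat \<Rightarrow> nat \<Rightarrow> (letter \<times> (nat \<times> nat \<times> nat)) set" where
  "split_edges N m M = UNIV \<times> star_edges N m M"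

definition split_ergodic :: "nat \<Rightarrow> nat \<Rightarrow> nat \<Rightarrow> nat \<Rightarrow> (nat \<Rightarrow> nat \<Rightarrow> nat) \<Rightarrow> (nat \<Rightarrow> nat list) \<Rightarrow> bool" where
  "split_ergodic N m M n0 e ord \<longleftrightarrow>
     (\<forall>y \<in> split_edges N m M. \<forall>z \<in> split_edges N m M. \<exists>L::nat.
        z \<in> fst ` set ((path_map (split_map N M n0 e ord) ^^ L) [(y, True)]))"

end

theory Submission
  imports Defs
begin

text \<open>Call \<open>z\<close> a successor of \<open>y\<close> if \<open>z\<close> occurs in the image of \<open>y\<close>; ergodicity of the
  split map is strong connectivity of this graph on the split edges. Along one generator \<open>k\<close>
  the map \<open>f\<^sub>\<lambda>\<close> moves each edge \<open>(i, k, j)\<close> to the next one in the order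
  \<open>(0,k,1), \<dots>, (N-1,k,1), (0,k,2), \<dots>, (N-1,k,M)\<close>, and the split map keeps the letter.
  The last edge \<open>(N-1,k,M)\<close> is sent to a path beginning with \<open>(0,k,1)\<close> back and forth, so
  its copy \<open>y\<close> is sent to a path beginning with the first two letters of \<open>\<phi>\<^sub>\<ell>(y)\<close> on
  \<open>(0,k,1)\<close>, and the graph joining each letter to these two letters is strongly connected.
  That path also visits \<open>(0,k',1)\<close> for every other generator \<open>k'\<close>; as all images under
  \<open>f\<^sub>\<lambda>\<close> have odd length \<open>\<ell>\<close>, the word \<open>\<phi>\<^sub>\<ell>(y)\<close> has length exactly \<open>\<ell>\<close>, so every edge of
  \<open>f\<^sub>\<lambda>(x\<^sub>I)\<close> carries a letter of the image of \<open>y\<^sub>I\<close>.\<close>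

definition transition_rel :: "('e \<Rightarrow> ('e \<times> bool) list) \<Rightarrow> 'e rel" where
  "transition_rel F = {(u, v). v \<in> fst ` set (F u)}"

lemma fst_set_rev_path [simp]: "fst ` set (rev_path p) = fst ` set p"
  unfolding rev_path_def by (force simp: image_iff)

lemma path_map_Cons:
  "path_map F ((x, d) # p) = (if d then F x else rev_path (F x)) @ path_map F p"
  by (simp add: path_map_def)

lemma fst_set_path_map: "fst ` set (path_map F p) = transition_rel F `` (fst ` set p)"
proof (induction p)
  case (Cons a p)
  obtain x d where a: "a = (x, d)" by fastforce
  have "fst ` set (path_map F (a # p)) = fst ` set (F x) \<union> fst ` set (path_map F p)"
    by (simp add: a path_map_Cons image_Un)
  also have "\<dots> = transition_rel F `` (fst ` set (a # p))"
    unfolding Cons.IH by (auto simp: a transition_rel_def)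
  finally show ?case .
qed (simp add: path_map_def)

lemma fst_set_path_map_iterate:
  "fst ` set ((path_map F ^^ L) p) = (transition_rel F ^^ L) `` (fst ` set p)"
proof (induction L)
  case (Suc L)
  have "fst ` set ((path_map F ^^ Suc L) p) = transition_rel F `` fst ` set ((path_map F ^^ L) p)"
    by (simp add: fst_set_path_map)
  also have "\<dots> = (transition_rel F ^^ Suc L) `` (fst ` set p)"
    by (simp only: Suc.IH relpow.simps relcomp_Image)
  finally show ?case .
qed simp

lemma path_map_iterate_visits:
  assumes "(y, z) \<in> (transition_rel F)\<^sup>*"
  shows "\<exists>L. z \<in> fst ` set ((path_map F ^^ L) [(y, True)])"
proof -
  from assms obtain L where "(y, z) \<in> transition_rel F ^^ L"
    using rtrancl_power by blast
  then have "z \<in> fst ` set ((path_map F ^^ L) [(y, True)])"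
    by (simp add: fst_set_path_map_iterate)
  then show ?thesis ..
qed

lemma split_ergodicI:
  assumes "\<And>y z. y \<in> split_edges N m M \<Longrightarrow> z \<in> split_edges N m M \<Longrightarrow>
    (y, z) \<in> (transition_rel (split_map N M n0 e ord))\<^sup>*"
  shows "split_ergodic N m M n0 e ord"
  unfolding split_ergodic_def by (simp add: assms path_map_iterate_visits)

text \<open>\<open>first_letter y \<cdot> (second_letter y)\<^sup>-\<^sup>1\<close> is the common prefix of the words
  \<open>\<phi>\<^sub>\<ell>(y)\<close>, \<open>\<ell> \<ge> 3\<close>.\<close>

fun first_letter :: "letter \<Rightarrow> letter" where
  "first_letter La = La" | "first_letter Lb = Lb" | "first_letter Lc = Lc" | "first_letter Ld = La"
| "first_letter Le = Lc" | "first_letter Lf = La" | "first_letter Lg = Lb"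

fun second_letter :: "letter \<Rightarrow> letter" where
  "second_letter La = Lg" | "second_letter Lb = Ld" | "second_letter Lc = Lf" | "second_letter Ld = Lb"
| "second_letter Le = Lb" | "second_letter Lf = Lc" | "second_letter Lg = Le"

lemma phi_Suc_0 [simp]: "phi (Suc 0) y = [(y, True)]"
  by (simp add: phi_def)

lemma phi_Cons_Cons:
  "l \<noteq> 1 \<Longrightarrow> \<exists>w. phi l y = (first_letter y, True) # (second_letter y, False) # w"
  by (cases y) (simp_all add: phi_def Let_def)

lemma length_phi:
  assumes "odd l"
  shows "length (phi l y) = l"
proof (cases "l = 1")
  case False
  then have "length (phi l y) = 3 + 2 * ((l - 3) div 2)"
    by (cases y) (simp_all add: phi_def Let_def length_concat sum_list_replicate)
  with assms False show ?thesis by presburger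
qed simp

definition letter_step :: "letter rel" where
  "letter_step = {(x, y). y = first_letter x \<or> y = second_letter x}"

lemma letter_step_trancl: "(x, y) \<in> letter_step\<^sup>+"
proof -
  have cycles: "(La, Lg) \<in> letter_step" "(Lg, Le) \<in> letter_step" "(Le, Lc) \<in> letter_step"
    "(Lc, Lf) \<in> letter_step" "(Lf, La) \<in> letter_step" "(Lg, Lb) \<in> letter_step"
    "(Lb, Ld) \<in> letter_step" "(Ld, La) \<in> letter_step"
    by (simp_all add: letter_step_def)
  have "(x, La) \<in> letter_step\<^sup>+" "(La, y) \<in> letter_step\<^sup>+"
    by (cases x; cases y; meson cycles trancl.r_into_trancl trancl_into_trancl2)+
  then show ?thesis by (rule trancl_trans)
qed

lemma length_back_forth [simp]: "length (back_forth r x) = 2 * r"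
  by (simp add: back_forth_def length_concat sum_list_replicate)

lemma even_length_concat_back_forth [simp]:
  "even (length (concat (map (\<lambda>j. back_forth (g j) (h j)) js)))"
  by (induction js) simp_all

lemma odd_length_flam: "odd (length (flam N M n0 e ord I))"
  by (simp add: flam_def fmu_def split: prod.split)

lemma split_map_single:
  "flam N M n0 e ord I = [(J, True)] \<Longrightarrow> split_map N M n0 e ord (y, I) = [((y, J), True)]"
  by (simp add: split_map_def)

lemma split_map_Cons_Cons:
  assumes "flam N M n0 e ord I = (J, True) # (J, False) # w"
  shows "\<exists>w'. split_map N M n0 e ord (y, I) =
    ((first_letter y, J), True) # ((second_letter y, J), False) # w'"
proof -
  obtain u where
    "phi (length (flam N M n0 e ord I)) y = (first_letter y, True) # (second_letter y, False) # u"
    using phi_Cons_Cons[of "length (flam N M n0 e ord I)" y] assms by auto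
  then show ?thesis
    using assms by (simp add: split_map_def)
qed

lemma split_map_covers:
  assumes "J \<in> fst ` set (flam N M n0 e ord I)"
  shows "\<exists>x. (x, J) \<in> fst ` set (split_map N M n0 e ord (y, I))"
proof -
  let ?w = "flam N M n0 e ord I"
  let ?z = "zip (phi (length ?w) y) ?w"
  from assms obtain d where "(J, d) \<in> set ?w" by force
  moreover have "length (phi (length ?w) y) = length ?w"
    using length_phi odd_length_flam by blast
  then have "set ?w = snd ` set ?z"
    by (metis map_snd_zip set_map)
  ultimately obtain x d' where "((x, d'), (J, d)) \<in> set ?z"
    by force
  then have "((x, J), d') \<in> set (split_map N M n0 e ord (y, I))"
    unfolding split_map_def Let_def by force
  then show ?thesis by force
qed

locale split_star_map =
  fixes N M n0 :: nat and e :: "nat \<Rightarrow> nat \<Rightarrow> nat" and ord :: "nat \<Rightarrow> nat list"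
  assumes N_pos: "1 \<le> N" and M_pos: "1 \<le> M"
begin

abbreviation step :: "(letter \<times> nat \<times> nat \<times> nat) rel" where
  "step \<equiv> transition_rel (split_map N M n0 e ord)"

text \<open>The edges of generator \<open>k\<close> in the order in which \<open>f\<^sub>\<lambda>\<close> runs through them.\<close>

definition edge_at :: "nat \<Rightarrow> nat \<Rightarrow> nat \<times> nat \<times> nat" where
  "edge_at k t = (t mod N, k, t div N + 1)"

lemma step_edge_at:
  assumes "Suc t < N * M"
  shows "((x, edge_at k t), (x, edge_at k (Suc t))) \<in> step"
proof (cases "Suc (t mod N) < N")
  case True
  then have "flam N M n0 e ord (edge_at k t) = [(edge_at k (Suc t), True)]"
    by (simp add: edge_at_def flam_def mod_Suc div_Suc)
  then show ?thesis
    by (simp add: split_map_single transition_rel_def)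
next
  case False
  then have mod_t: "t mod N = N - 1"
    using N_pos mod_less_divisor[of N t] by linarith
  have "t = t div N * N + (N - 1)"
    using div_mult_mod_eq[of t N] mod_t by simp
  then have "N * (t div N + 1) < N * M"
    using assms N_pos by (simp add: algebra_simps)
  then have "t div N + 1 < M"
    using mult_less_cancel1 by blast
  then have "flam N M n0 e ord (edge_at k t) = [(edge_at k (Suc t), True)]"
    using mod_t N_pos by (simp add: edge_at_def flam_def fmu_def mod_Suc div_Suc)
  then show ?thesis
    by (simp add: split_map_single transition_rel_def)
qed

lemma edge_at_chain:
  "t \<le> t' \<Longrightarrow> t' < N * M \<Longrightarrow> ((x, edge_at k t), (x, edge_at k t')) \<in> step\<^sup>*"
proof (induction t' rule: dec_induct)
  case (step t')
  then show ?case
    using step_edge_at by (meson Suc_lessD rtrancl.rtrancl_into_rtrancl)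
qed simp

lemma edge_at_first: "edge_at k 0 = (0, k, 1)"
  by (simp add: edge_at_def)

lemma edge_at_star_edge:
  assumes "i < N" "1 \<le> j" "j \<le> M"
  shows "edge_at k ((j - 1) * N + i) = (i, k, j)" and "(j - 1) * N + i < N * M"
proof -
  show "edge_at k ((j - 1) * N + i) = (i, k, j)"
    using assms by (simp add: edge_at_def)
  have "(j - 1) * N + i < (j - 1) * N + N" using assms by simp
  also have "\<dots> \<le> N * M" using assms by (simp add: algebra_simps)
  finally show "(j - 1) * N + i < N * M" .
qed

lemma first_edge_reaches_split_edge:
  assumes "(x, (i, k, j)) \<in> split_edges N m M"
  shows "((x, (0, k, 1)), (x, (i, k, j))) \<in> step\<^sup>*"
proof -
  from assms have "i < N" "1 \<le> j" "j \<le> M"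
    by (simp_all add: split_edges_def star_edges_def)
  then show ?thesis
    using edge_at_chain[of 0 "(j - 1) * N + i"] edge_at_star_edge edge_at_first by simp
qed

lemma split_edge_reaches_last_edge:
  assumes "(x, (i, k, j)) \<in> split_edges N m M"
  shows "((x, (i, k, j)), (x, (N - 1, k, M))) \<in> step\<^sup>*"
proof -
  from assms have edge: "i < N" "1 \<le> j" "j \<le> M"
    by (simp_all add: split_edges_def star_edges_def)
  have last: "N - 1 < N" "1 \<le> M" "M \<le> M"
    using N_pos M_pos by simp_all
  have "(j - 1) * N + i \<le> (M - 1) * N + (N - 1)"
    using edge by (intro add_mono mult_le_mono1) simp_all
  then have "((x, edge_at k ((j - 1) * N + i)), (x, edge_at k ((M - 1) * N + (N - 1)))) \<in> step\<^sup>*"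
    using edge_at_chain edge_at_star_edge(2)[OF last] by blast
  then show ?thesis
    by (simp only: edge_at_star_edge(1)[OF edge] edge_at_star_edge(1)[OF last])
qed

lemma first_edge_reaches_last_edge: "((x, (0, k, 1)), (x, (N - 1, k, M))) \<in> step\<^sup>*"
  using edge_at_chain[of 0 "(M - 1) * N + (N - 1)"] edge_at_star_edge[of "N - 1" M] edge_at_first
    N_pos M_pos by simp

lemma flam_last_edge:
  "\<exists>w. flam N M n0 e ord (N - 1, k, M) = ((0, k, 1), True) # ((0, k, 1), False) # w"
  using N_pos by (simp add: flam_def fmu_def back_forth_def)

lemma first_edge_in_flam_last_edge:
  assumes "k' \<in> set (ord k)"
  shows "(0, k', 1) \<in> fst ` set (flam N M n0 e ord (N - 1, k, M))"
proof -
  have "((k', 1), True) \<in> set (fmu M n0 e ord (k, M))"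
    using assms by (auto simp: fmu_def back_forth_def)
  then show ?thesis
    using N_pos by (force simp: flam_def)
qed

lemma last_edge_step:
  assumes "(x, x') \<in> letter_step"
  shows "((x, (N - 1, k, M)), (x', (0, k, 1))) \<in> step"
proof -
  obtain w where "split_map N M n0 e ord (x, (N - 1, k, M)) =
      ((first_letter x, (0, k, 1)), True) # ((second_letter x, (0, k, 1)), False) # w"
    using flam_last_edge split_map_Cons_Cons by blast
  with assms show ?thesis
    by (auto simp: letter_step_def transition_rel_def)
qed

lemma last_edge_reaches_first_edge: "((x, (N - 1, k, M)), (x', (0, k, 1))) \<in> step\<^sup>*"
proof -
  have "(x, x') \<in> letter_step\<^sup>+"
    by (rule letter_step_trancl)
  then show ?thesis
  proof (induction rule: trancl_induct)
    case (base x')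
    then show ?case
      using last_edge_step by blast
  next
    case (step y x')
    have "((x, (N - 1, k, M)), (y, (N - 1, k, M))) \<in> step\<^sup>*"
      using step.IH first_edge_reaches_last_edge by (rule rtrancl_trans)
    then show ?case
      using last_edge_step[OF step(2)] by (rule rtrancl_into_rtrancl)
  qed
qed

lemma last_edge_reaches_other_first_edge:
  assumes "k' \<in> set (ord k)"
  shows "((x, (N - 1, k, M)), (x', (0, k', 1))) \<in> step\<^sup>*"
proof -
  obtain x0 where "((x, (N - 1, k, M)), (x0, (0, k', 1))) \<in> step"
    using split_map_covers[OF first_edge_in_flam_last_edge[OF assms], of x]
    by (auto simp: transition_rel_def)
  also have "((x0, (0, k', 1)), (x0, (N - 1, k', M))) \<in> step\<^sup>*"
    by (rule first_edge_reaches_last_edge)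
  also have "((x0, (N - 1, k', M)), (x', (0, k', 1))) \<in> step\<^sup>*"
    by (rule last_edge_reaches_first_edge)
  finally show ?thesis .
qed

theorem split_map_ergodic:
  assumes "\<forall>k<m. set (ord k) = {j. j < m \<and> j \<noteq> k}"
  shows "split_ergodic N m M n0 e ord"
proof (rule split_ergodicI)
  fix y z
  assume y: "y \<in> split_edges N m M" and z: "z \<in> split_edges N m M"
  obtain x i k j where y_eq: "y = (x, (i, k, j))" by (cases y) auto
  obtain x' i' k' j' where z_eq: "z = (x', (i', k', j'))" by (cases z) auto
  have "k < m" "k' < m"
    using y z by (simp_all add: y_eq z_eq split_edges_def star_edges_def)
  have "(y, (x, (N - 1, k, M))) \<in> step\<^sup>*"
    using split_edge_reaches_last_edge y by (simp add: y_eq)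
  also have "((x, (N - 1, k, M)), (x', (0, k', 1))) \<in> step\<^sup>*"
  proof (cases "k = k'")
    case True
    then show ?thesis using last_edge_reaches_first_edge by simp
  next
    case False
    with assms \<open>k < m\<close> \<open>k' < m\<close> have "k' \<in> set (ord k)" by simp
    then show ?thesis by (rule last_edge_reaches_other_first_edge)
  qed
  also have "((x', (0, k', 1)), z) \<in> step\<^sup>*"
    using first_edge_reaches_split_edge z by (simp add: z_eq)
  finally show "(y, z) \<in> step\<^sup>*" .
qed

end

text \<open>The arithmetic hypotheses only make \<open>f\<^sub>\<mu>\<close> the star map of the Perron number \<open>\<mu>\<close>;
  ergodicity of the split map is purely combinatorial and needs only \<open>N, M \<ge> 1\<close> and the
  orders \<open>ord k\<close>.\<close>

theorem mainTheorem9: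
  fixes lam :: real and N m M n0 N' p :: nat
    and e :: "nat \<Rightarrow> nat \<Rightarrow> nat" and ord :: "nat \<Rightarrow> nat list" and s :: "nat \<Rightarrow> real"
  assumes "weak_perron lam"
    and "N \<ge> 1"
    and "perron (lam ^ N)"
    and "m \<ge> 1"
    and "0 < n0" and "n0 < N'"
    and "alg_int (((lam ^ N) ^ N' - (lam ^ N) ^ n0) / 2)"
    and "M = p * (N' - n0) + N'"
    and "\<forall>k<m. in_Qfield (s k) (lam ^ N) \<and> alg_int (s k) \<and> s k \<noteq> 0"
    and "\<forall>k<m. (lam ^ N) ^ M * s k =
            (\<Sum>i<m. (2 * real (e k i) + 2) * s i) + 2 * (lam ^ N) * s k + (lam ^ N) ^ n0 * s k"
    and "\<forall>k<m. distinct (ord k) \<and> set (ord k) = {j. j < m \<and> j \<noteq> k}"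
  shows "split_ergodic N m M n0 e ord"
proof -
  have "1 \<le> M"
    using assms(5,6,8) by simp
  then interpret split_star_map N M n0 e ord
    using assms(2) by unfold_locales
  show ?thesis
    using assms(11) by (intro split_map_ergodic) auto
qed

end
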